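(* If $d_{GH}\bigl(\mathcal{H}(X),\mathcal{H}(Y)\bigr) = d_{GH}(X,Y)$ for all finite metric spaces $X,Y$ in general position, then $d_{GH}\bigl(\mathcal{H}(X),\mathcal{H}(Y)\bigr) = d_{GH}(X,Y)$ for all compact metric spaces $X,Y$.
   Context: A finite metric space is in general position if all its nonzero distances are pairwise distinct and all triangle inequalities among its points are strict. $d_{GH}$ is the Gromov–Hausdorff distance (the infimum of $r$ such that there is a metric space $Z$ containing isometric copies $X',Y'$ of $X,Y$ with Hausdorff distance $|X'Y'|_Z\le r$). For a compact metric space $X$, $\mathcal{H}(X)$ is the set of all nonempty closed subsets of $X$ with the Hausdorff distance $|AB| = \max\{\sup_{a\in A}\inf_{b\in B}|ab|, \sup_{b\in B}\inf_{a\in A}|ab|\}$. *)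

theory Defs
  imports "HOL-Analysis.Analysis"
begin

definition hdist :: "('a \<Rightarrow> 'a \<Rightarrow> real) \<Rightarrow> 'a set \<Rightarrow> 'a set \<Rightarrow> real" where
  "hdist d A B = max (SUP a\<in>A. INF b\<in>B. d a b) (SUP b\<in>B. INF a\<in>A. d a b)"

text \<open>Hyperspace H(X): nonempty closed subsets of the metric space (M,d); its metric is hdist d.\<close>
definition hyperspace :: "'a set \<Rightarrow> ('a \<Rightarrow> 'a \<Rightarrow> real) \<Rightarrow> 'a set set" where
  "hyperspace M d = {A. A \<subseteq> M \<and> A \<noteq> {} \<and> closedin (Metric_space.mtopology M d) A}"

text \<open>Such pseudometrics correspond exactly to metric spaces Z containing isometric
  copies of X and Y (take the metric quotient / pull back along the embeddings).\<close>
definition admissible ::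
  "'a set \<Rightarrow> ('a \<Rightarrow> 'a \<Rightarrow> real) \<Rightarrow> 'b set \<Rightarrow> ('b \<Rightarrow> 'b \<Rightarrow> real)
    \<Rightarrow> ('a + 'b \<Rightarrow> 'a + 'b \<Rightarrow> real) \<Rightarrow> bool" where
  "admissible X dX Y dY D \<longleftrightarrow>
     (\<forall>x\<in>X. \<forall>x'\<in>X. D (Inl x) (Inl x') = dX x x') \<and>
     (\<forall>y\<in>Y. \<forall>y'\<in>Y. D (Inr y) (Inr y') = dY y y') \<and>
     (\<forall>u\<in>Inl ` X \<union> Inr ` Y. D u u = 0) \<and>
     (\<forall>u\<in>Inl ` X \<union> Inr ` Y. \<forall>v\<in>Inl ` X \<union> Inr ` Y. 0 \<le> D u v \<and> D u v = D v u) \<and>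
     (\<forall>u\<in>Inl ` X \<union> Inr ` Y. \<forall>v\<in>Inl ` X \<union> Inr ` Y. \<forall>w\<in>Inl ` X \<union> Inr ` Y.
        D u w \<le> D u v + D v w)"

definition gh_dist ::
  "'a set \<Rightarrow> ('a \<Rightarrow> 'a \<Rightarrow> real) \<Rightarrow> 'b set \<Rightarrow> ('b \<Rightarrow> 'b \<Rightarrow> real) \<Rightarrow> real" where
  "gh_dist X dX Y dY = Inf {hdist D (Inl ` X) (Inr ` Y) | D. admissible X dX Y dY D}"

definition general_position :: "'a set \<Rightarrow> ('a \<Rightarrow> 'a \<Rightarrow> real) \<Rightarrow> bool" where
  "general_position M d \<longleftrightarrow>
     (\<forall>x\<in>M. \<forall>y\<in>M. \<forall>u\<in>M. \<forall>v\<in>M. x \<noteq> y \<and> u \<noteq> v \<and> {x, y} \<noteq> {u, v} \<longrightarrow> d x y \<noteq> d u v) \<and>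
     (\<forall>x\<in>M. \<forall>y\<in>M. \<forall>z\<in>M. x \<noteq> y \<and> y \<noteq> z \<and> x \<noteq> z \<longrightarrow> d x z < d x y + d y z)"

end

theory Submission
  imports Defs
begin

(* The hyperspace construction is 1-Lipschitz for the Gromov-Hausdorff distance: an admissible
   pseudometric D on X + Y whose Hausdorff distance between X and Y is below r induces the
   admissible pseudometric hdist D on H(X) + H(Y), because for a closed A in X the points y with
   INF a:A. D a y <= r form a closed set whose Hausdorff distance to A is at most r (and
   symmetrically).  For the converse, approximate compact X and Y within e by finite nets; a
   finite metric d becomes one in general position after adding e/2 + eta * c(i, j) to every
   nonzero distance, where c is an injective code of unordered pairs and eta > 0 is small and
   avoids finitely many values.  For such approximations X', Y' the hypothesis, the triangle
   inequality and the Lipschitz property give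
     d(X, Y) <= d(X', Y') + 2 e = d(H X', H Y') + 2 e <= d(H X, H Y) + 4 e. *)

(* Pseudometrics, because admissible D need not separate points; boundedness is what makes the
   real-valued SUP in hdist meaningful. *)
locale bounded_pseudometric =
  fixes S :: "'a set" and d :: "'a \<Rightarrow> 'a \<Rightarrow> real"
  assumes nonempty: "S \<noteq> {}"
    and zero: "x \<in> S \<Longrightarrow> d x x = 0"
    and commute: "x \<in> S \<Longrightarrow> y \<in> S \<Longrightarrow> d x y = d y x"
    and triangle: "x \<in> S \<Longrightarrow> y \<in> S \<Longrightarrow> z \<in> S \<Longrightarrow> d x z \<le> d x y + d y z"
    and bounded: "\<exists>c. \<forall>x\<in>S. \<forall>y\<in>S. d x y \<le> c"
begin

lemma nonneg: "x \<in> S \<Longrightarrow> y \<in> S \<Longrightarrow> 0 \<le> d x y"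
  using triangle[of x y x] zero[of x] commute[of x y] by linarith

lemma subset: "T \<subseteq> S \<Longrightarrow> T \<noteq> {} \<Longrightarrow> bounded_pseudometric T d"
  by unfold_locales (use zero commute triangle bounded in \<open>blast+\<close>)

lemma bdd_below_dist: "a \<in> S \<Longrightarrow> B \<subseteq> S \<Longrightarrow> bdd_below ((\<lambda>b. d a b) ` B)"
  by (rule bdd_belowI[of _ 0]) (auto intro: nonneg)

lemma INF_dist_le: "a \<in> S \<Longrightarrow> B \<subseteq> S \<Longrightarrow> b \<in> B \<Longrightarrow> (INF b\<in>B. d a b) \<le> d a b"
  by (rule cINF_lower[OF bdd_below_dist])

lemma INF_dist_triangle:
  assumes "a \<in> S" "a' \<in> S" "B \<subseteq> S" "B \<noteq> {}"
  shows "(INF b\<in>B. d a b) \<le> d a a' + (INF b\<in>B. d a' b)"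
proof -
  have "(INF b\<in>B. d a b) - d a a' \<le> (INF b\<in>B. d a' b)"
  proof (rule cINF_greatest[OF \<open>B \<noteq> {}\<close>])
    fix b assume "b \<in> B"
    then show "(INF b\<in>B. d a b) - d a a' \<le> d a' b"
      using INF_dist_le[of a B b] triangle[of a a' b] assms by force
  qed
  then show ?thesis by simp
qed

lemma SUP_INF_dist_commute:
  assumes "A \<subseteq> S" "B \<subseteq> S"
  shows "(SUP b\<in>B. INF a\<in>A. d a b) = (SUP b\<in>B. INF a\<in>A. d b a)"
  by (intro SUP_cong INF_cong refl) (use assms commute in blast)

lemma hdist_commute: "A \<subseteq> S \<Longrightarrow> B \<subseteq> S \<Longrightarrow> hdist d A B = hdist d B A"
  unfolding hdist_def by (simp add: SUP_INF_dist_commute max.commute)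

lemma hdist_le_iff:
  assumes "A \<subseteq> S" "B \<subseteq> S" "A \<noteq> {}" "B \<noteq> {}"
  shows "hdist d A B \<le> r \<longleftrightarrow>
    (\<forall>a\<in>A. (INF b\<in>B. d a b) \<le> r) \<and> (\<forall>b\<in>B. (INF a\<in>A. d b a) \<le> r)"
proof -
  obtain c where c: "\<forall>x\<in>S. \<forall>y\<in>S. d x y \<le> c" using bounded by blast
  have SUP_le_iff: "(SUP a\<in>A. INF b\<in>B. d a b) \<le> r \<longleftrightarrow> (\<forall>a\<in>A. (INF b\<in>B. d a b) \<le> r)"
    if "A \<subseteq> S" "B \<subseteq> S" "A \<noteq> {}" "B \<noteq> {}" for A B
  proof (rule cSUP_le_iff[OF \<open>A \<noteq> {}\<close>], rule bdd_aboveI2)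
    fix a assume "a \<in> A"
    obtain b where "b \<in> B" using \<open>B \<noteq> {}\<close> by blast
    then show "(INF b\<in>B. d a b) \<le> c"
      using INF_dist_le[of a B b] c \<open>a \<in> A\<close> that by force
  qed
  have "hdist d A B = max (SUP a\<in>A. INF b\<in>B. d a b) (SUP b\<in>B. INF a\<in>A. d b a)"
    unfolding hdist_def SUP_INF_dist_commute[OF assms(1,2)] ..
  then show ?thesis
    using SUP_le_iff[of A B] SUP_le_iff[of B A] assms by simp
qed

lemma hdist_leI:
  assumes "A \<subseteq> S" "B \<subseteq> S" "A \<noteq> {}" "B \<noteq> {}"
    and "\<And>a. a \<in> A \<Longrightarrow> \<exists>b\<in>B. d a b \<le> r" "\<And>b. b \<in> B \<Longrightarrow> \<exists>a\<in>A. d b a \<le> r"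
  shows "hdist d A B \<le> r"
  unfolding hdist_le_iff[OF assms(1-4)]
proof (intro conjI ballI)
  fix a assume "a \<in> A"
  then obtain b where "b \<in> B" "d a b \<le> r" using assms(5) by blast
  then show "(INF b\<in>B. d a b) \<le> r"
    using INF_dist_le[of a B b] \<open>a \<in> A\<close> assms(1,2) by force
next
  fix b assume "b \<in> B"
  then obtain a where "a \<in> A" "d b a \<le> r" using assms(6) by blast
  then show "(INF a\<in>A. d b a) \<le> r"
    using INF_dist_le[of b A a] \<open>b \<in> B\<close> assms(1,2) by force
qed

lemma hdist_lessD:
  assumes "A \<subseteq> S" "B \<subseteq> S" "A \<noteq> {}" "B \<noteq> {}" "hdist d A B < r"
  shows "a \<in> A \<Longrightarrow> \<exists>b\<in>B. d a b < r" and "b \<in> B \<Longrightarrow> \<exists>a\<in>A. d b a < r"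
proof -
  have "(\<forall>a\<in>A. (INF b\<in>B. d a b) < r) \<and> (\<forall>b\<in>B. (INF a\<in>A. d b a) < r)"
    using hdist_le_iff[OF assms(1-4), of "hdist d A B"] assms(5) by force
  then show "a \<in> A \<Longrightarrow> \<exists>b\<in>B. d a b < r" and "b \<in> B \<Longrightarrow> \<exists>a\<in>A. d b a < r"
    using cInf_lessD[of "d a ` B" r] cInf_lessD[of "d b ` A" r] assms(3,4) by auto
qed

lemma hdist_nonneg:
  assumes "A \<subseteq> S" "B \<subseteq> S" "A \<noteq> {}" "B \<noteq> {}"
  shows "0 \<le> hdist d A B"
proof -
  obtain a where "a \<in> A" using assms by blast
  have "0 \<le> (INF b\<in>B. d a b)"
    using \<open>a \<in> A\<close> assms by (intro cINF_greatest) (auto intro: nonneg)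
  also have "\<dots> \<le> hdist d A B"
    using hdist_le_iff[OF assms, of "hdist d A B"] \<open>a \<in> A\<close> by blast
  finally show ?thesis .
qed

lemma hdist_self:
  assumes "A \<subseteq> S" "A \<noteq> {}"
  shows "hdist d A A = 0"
proof (rule order_antisym)
  show "hdist d A A \<le> 0"
    by (rule hdist_leI) (use assms zero in force)+
qed (use assms hdist_nonneg in blast)

lemma hdist_triangle:
  assumes "A \<subseteq> S" "B \<subseteq> S" "C \<subseteq> S" "A \<noteq> {}" "B \<noteq> {}" "C \<noteq> {}"
  shows "hdist d A C \<le> hdist d A B + hdist d B C"
proof -
  have AB: "\<forall>a\<in>A. (INF b\<in>B. d a b) \<le> hdist d A B" "\<forall>b\<in>B. (INF a\<in>A. d b a) \<le> hdist d A B"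
    using hdist_le_iff[of A B "hdist d A B"] assms by simp_all
  have BC: "\<forall>b\<in>B. (INF c\<in>C. d b c) \<le> hdist d B C" "\<forall>c\<in>C. (INF b\<in>B. d c b) \<le> hdist d B C"
    using hdist_le_iff[of B C "hdist d B C"] assms by simp_all
  have chain: "(INF z\<in>Z. d x z) \<le> (INF y\<in>Y. d x y) + s"
    if "x \<in> S" "Y \<subseteq> S" "Z \<subseteq> S" "Y \<noteq> {}" "Z \<noteq> {}" "\<forall>y\<in>Y. (INF z\<in>Z. d y z) \<le> s" for x Y Z s
  proof -
    have "(INF z\<in>Z. d x z) - s \<le> (INF y\<in>Y. d x y)"
    proof (rule cINF_greatest[OF \<open>Y \<noteq> {}\<close>])
      fix y assume "y \<in> Y"
      then show "(INF z\<in>Z. d x z) - s \<le> d x y"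
        using INF_dist_triangle[of x y Z] that by force
    qed
    then show ?thesis by simp
  qed
  show ?thesis
  proof (subst hdist_le_iff[OF assms(1,3,4,6)], intro conjI ballI)
    fix a assume "a \<in> A"
    then show "(INF c\<in>C. d a c) \<le> hdist d A B + hdist d B C"
      using chain[of a B C "hdist d B C"] AB(1) BC(1) assms by force
  next
    fix c assume "c \<in> C"
    then show "(INF a\<in>A. d c a) \<le> hdist d A B + hdist d B C"
      using chain[of c B A "hdist d A B"] AB(2) BC(2) assms by force
  qed
qed

lemma hdist_bounded_pseudometric:
  "bounded_pseudometric {A. A \<subseteq> S \<and> A \<noteq> {}} (hdist d)"
proof
  obtain c where c: "\<forall>x\<in>S. \<forall>y\<in>S. d x y \<le> c" using bounded by blast
  have "hdist d A B \<le> c" if "A \<subseteq> S" "B \<subseteq> S" "A \<noteq> {}" "B \<noteq> {}" for A B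
    by (rule hdist_leI) (use that c in \<open>blast+\<close>)
  then show "\<exists>c. \<forall>A\<in>{A. A \<subseteq> S \<and> A \<noteq> {}}. \<forall>B\<in>{A. A \<subseteq> S \<and> A \<noteq> {}}. hdist d A B \<le> c"
    by blast
qed (use nonempty hdist_self hdist_commute hdist_triangle in auto)

end

lemma admissibleD:
  assumes "admissible X dX Y dY D"
  shows admissible_Inl: "x \<in> X \<Longrightarrow> x' \<in> X \<Longrightarrow> D (Inl x) (Inl x') = dX x x'"
    and admissible_Inr: "y \<in> Y \<Longrightarrow> y' \<in> Y \<Longrightarrow> D (Inr y) (Inr y') = dY y y'"
    and admissible_zero: "u \<in> Inl ` X \<union> Inr ` Y \<Longrightarrow> D u u = 0"
    and admissible_commute: "u \<in> Inl ` X \<union> Inr ` Y \<Longrightarrow> v \<in> Inl ` X \<union> Inr ` Y \<Longrightarrow> D u v = D v u"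
    and admissible_triangle: "u \<in> Inl ` X \<union> Inr ` Y \<Longrightarrow> v \<in> Inl ` X \<union> Inr ` Y \<Longrightarrow>
      w \<in> Inl ` X \<union> Inr ` Y \<Longrightarrow> D u w \<le> D u v + D v w"
proof -
  note adm = assms[unfolded admissible_def]
  show "x \<in> X \<Longrightarrow> x' \<in> X \<Longrightarrow> D (Inl x) (Inl x') = dX x x'"
    using adm[THEN conjunct1] by blast
  show "y \<in> Y \<Longrightarrow> y' \<in> Y \<Longrightarrow> D (Inr y) (Inr y') = dY y y'"
    using adm[THEN conjunct2, THEN conjunct1] by blast
  show "u \<in> Inl ` X \<union> Inr ` Y \<Longrightarrow> D u u = 0"
    using adm[THEN conjunct2, THEN conjunct2, THEN conjunct1] by blast
  show "u \<in> Inl ` X \<union> Inr ` Y \<Longrightarrow> v \<in> Inl ` X \<union> Inr ` Y \<Longrightarrow> D u v = D v u"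
    using adm[THEN conjunct2, THEN conjunct2, THEN conjunct2, THEN conjunct1] by blast
  show "u \<in> Inl ` X \<union> Inr ` Y \<Longrightarrow> v \<in> Inl ` X \<union> Inr ` Y \<Longrightarrow>
      w \<in> Inl ` X \<union> Inr ` Y \<Longrightarrow> D u w \<le> D u v + D v w"
    using adm[THEN conjunct2, THEN conjunct2, THEN conjunct2, THEN conjunct2] by blast
qed


lemma admissible_cross_dist:
  assumes D: "admissible X dX Y dY D" and "x \<in> X" "x' \<in> X" "y \<in> Y" "y' \<in> Y"
  shows "0 \<le> D (Inl x) (Inr y)"
    and "D (Inl x) (Inr y) \<le> dX x x' + D (Inl x') (Inr y)"
    and "D (Inl x) (Inr y) \<le> D (Inl x) (Inr y') + dY y' y"
    and "dX x x' \<le> D (Inl x) (Inr y) + D (Inl x') (Inr y)"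
    and "dY y y' \<le> D (Inl x) (Inr y) + D (Inl x) (Inr y')"
proof -
  let ?U = "Inl ` X \<union> Inr ` Y"
  have U: "Inl x \<in> ?U" "Inl x' \<in> ?U" "Inr y \<in> ?U" "Inr y' \<in> ?U" using assms by auto
  note tri = admissible_triangle[OF D] and sym = admissible_commute[OF D]
  show "0 \<le> D (Inl x) (Inr y)"
    using tri[OF U(1,3,1)] sym[OF U(1,3)] admissible_zero[OF D U(1)] by linarith
  show "D (Inl x) (Inr y) \<le> dX x x' + D (Inl x') (Inr y)"
    using tri[OF U(1,2,3)] admissible_Inl[OF D assms(2,3)] by simp
  show "D (Inl x) (Inr y) \<le> D (Inl x) (Inr y') + dY y' y"
    using tri[OF U(1,4,3)] admissible_Inr[OF D assms(5,4)] by simp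
  show "dX x x' \<le> D (Inl x) (Inr y) + D (Inl x') (Inr y)"
    using tri[OF U(1,3,2)] admissible_Inl[OF D assms(2,3)] sym[OF U(3,2)] by simp
  show "dY y y' \<le> D (Inl x) (Inr y) + D (Inl x) (Inr y')"
    using tri[OF U(3,1,4)] admissible_Inr[OF D assms(4,5)] sym[OF U(3,1)] by simp
qed

lemma admissible_bounded_pseudometric:
  assumes X: "bounded_pseudometric X dX" and Y: "bounded_pseudometric Y dY"
    and D: "admissible X dX Y dY D"
  shows "bounded_pseudometric (Inl ` X \<union> Inr ` Y) D"
proof
  let ?U = "Inl ` X \<union> Inr ` Y"
  show "?U \<noteq> {}" using bounded_pseudometric.nonempty[OF X] by blast
  show "D u u = 0" if "u \<in> ?U" for u using admissible_zero[OF D that] .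
  show "D u v = D v u" if "u \<in> ?U" "v \<in> ?U" for u v using admissible_commute[OF D that] .
  show "D u w \<le> D u v + D v w" if "u \<in> ?U" "v \<in> ?U" "w \<in> ?U" for u v w
    using admissible_triangle[OF D that] .
  interpret X: bounded_pseudometric X dX by (fact X)
  interpret Y: bounded_pseudometric Y dY by (fact Y)
  obtain x0 y0 where x0: "x0 \<in> X" and y0: "y0 \<in> Y" using X.nonempty Y.nonempty by blast
  obtain cX cY where cX: "\<forall>x\<in>X. \<forall>x'\<in>X. dX x x' \<le> cX" and cY: "\<forall>y\<in>Y. \<forall>y'\<in>Y. dY y y' \<le> cY"
    using X.bounded Y.bounded by blast
  define K where "K = cX + cY + D (Inl x0) (Inr y0)"
  have "0 \<le> cX" using cX x0 X.nonneg[OF x0 x0] by (meson order_trans)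
  have "0 \<le> cY" using cY y0 Y.nonneg[OF y0 y0] by (meson order_trans)
  have "0 \<le> D (Inl x0) (Inr y0)" by (rule admissible_cross_dist(1)[OF D x0 x0 y0 y0])
  have x0U: "Inl x0 \<in> ?U" and y0U: "Inr y0 \<in> ?U" using x0 y0 by auto
  have near: "D (Inl x0) u \<le> K" if "u \<in> ?U" for u
  proof (cases u)
    case (Inl x)
    with that have "x \<in> X" by blast
    then have "D (Inl x0) u \<le> cX" using cX x0 admissible_Inl[OF D x0] Inl by simp
    then show ?thesis unfolding K_def using \<open>0 \<le> cY\<close> \<open>0 \<le> D (Inl x0) (Inr y0)\<close> by linarith
  next
    case (Inr y)
    with that have "y \<in> Y" by blast
    then have "D (Inr y0) u \<le> cY" using cY y0 admissible_Inr[OF D y0] Inr by simp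
    then show ?thesis
      using admissible_triangle[OF D x0U y0U that] \<open>0 \<le> cX\<close> unfolding K_def by linarith
  qed
  have "D u v \<le> 2 * K" if "u \<in> ?U" "v \<in> ?U" for u v
    using admissible_triangle[OF D that(1) x0U that(2)] admissible_commute[OF D that(1) x0U]
      near[OF that(1)] near[OF that(2)] by argo
  then show "\<exists>c. \<forall>u\<in>?U. \<forall>v\<in>?U. D u v \<le> c" by blast
qed

definition glue :: "('a \<Rightarrow> 'a \<Rightarrow> real) \<Rightarrow> ('b \<Rightarrow> 'b \<Rightarrow> real) \<Rightarrow> ('a \<Rightarrow> 'b \<Rightarrow> real)
    \<Rightarrow> 'a + 'b \<Rightarrow> 'a + 'b \<Rightarrow> real" where
  "glue dX dY C u v = (case (u, v) of
      (Inl x, Inl x') \<Rightarrow> dX x x' | (Inl x, Inr y) \<Rightarrow> C x y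
    | (Inr y, Inl x) \<Rightarrow> C x y | (Inr y, Inr y') \<Rightarrow> dY y y')"

lemma glue_simps [simp]:
  "glue dX dY C (Inl x) (Inl x') = dX x x'" "glue dX dY C (Inl x) (Inr y) = C x y"
  "glue dX dY C (Inr y) (Inl x) = C x y" "glue dX dY C (Inr y) (Inr y') = dY y y'"
  by (simp_all add: glue_def)

lemma admissible_glue:
  assumes X: "bounded_pseudometric X dX" and Y: "bounded_pseudometric Y dY"
    and nonneg: "\<And>x y. x \<in> X \<Longrightarrow> y \<in> Y \<Longrightarrow> 0 \<le> C x y"
    and left: "\<And>x x' y. x \<in> X \<Longrightarrow> x' \<in> X \<Longrightarrow> y \<in> Y \<Longrightarrow> C x y \<le> dX x x' + C x' y"
    and right: "\<And>x y y'. x \<in> X \<Longrightarrow> y \<in> Y \<Longrightarrow> y' \<in> Y \<Longrightarrow> C x y \<le> C x y' + dY y' y"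
    and span_left: "\<And>x x' y. x \<in> X \<Longrightarrow> x' \<in> X \<Longrightarrow> y \<in> Y \<Longrightarrow> dX x x' \<le> C x y + C x' y"
    and span_right: "\<And>x y y'. x \<in> X \<Longrightarrow> y \<in> Y \<Longrightarrow> y' \<in> Y \<Longrightarrow> dY y y' \<le> C x y + C x y'"
  shows "admissible X dX Y dY (glue dX dY C)"
proof -
  interpret X: bounded_pseudometric X dX by (fact X)
  interpret Y: bounded_pseudometric Y dY by (fact Y)
  have left': "C x' y \<le> C x y + dX x x'" if "x \<in> X" "x' \<in> X" "y \<in> Y" for x x' y
    using left[of x' x y] X.commute[of x x'] that by simp
  have right': "C x y \<le> dY y y' + C x y'" if "x \<in> X" "y \<in> Y" "y' \<in> Y" for x y y'
    using right[of x y y'] Y.commute[of y y'] that by simp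
  have "glue dX dY C u w \<le> glue dX dY C u v + glue dX dY C v w"
    if "u \<in> Inl ` X \<union> Inr ` Y" "v \<in> Inl ` X \<union> Inr ` Y" "w \<in> Inl ` X \<union> Inr ` Y" for u v w
    using that
    by (cases u; cases v; cases w)
      (auto intro: X.triangle Y.triangle left left' right right' span_left span_right)
  then show ?thesis
    unfolding admissible_def
  proof (intro conjI ballI)
    fix u v assume "u \<in> Inl ` X \<union> Inr ` Y" "v \<in> Inl ` X \<union> Inr ` Y"
    then show "0 \<le> glue dX dY C u v" "glue dX dY C u v = glue dX dY C v u"
      by (auto simp: X.nonneg Y.nonneg nonneg intro: X.commute Y.commute)
  qed (auto simp: X.zero Y.zero)
qed

lemma gh_dist_bdd_below:
  assumes "bounded_pseudometric X dX" "bounded_pseudometric Y dY"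
  shows "bdd_below {hdist D (Inl ` X) (Inr ` Y) | D. admissible X dX Y dY D}"
proof (rule bdd_belowI[of _ 0], clarify)
  fix D assume D: "admissible X dX Y dY D"
  interpret U: bounded_pseudometric "Inl ` X \<union> Inr ` Y" D
    by (rule admissible_bounded_pseudometric[OF assms D])
  show "0 \<le> hdist D (Inl ` X) (Inr ` Y)"
    using assms[THEN bounded_pseudometric.nonempty] by (intro U.hdist_nonneg) auto
qed

lemma admissible_exists:
  assumes X: "bounded_pseudometric X dX" and Y: "bounded_pseudometric Y dY"
  shows "\<exists>D. admissible X dX Y dY D"
proof -
  interpret X: bounded_pseudometric X dX by (fact X)
  interpret Y: bounded_pseudometric Y dY by (fact Y)
  obtain cX cY where cX: "\<forall>x\<in>X. \<forall>x'\<in>X. dX x x' \<le> cX" and cY: "\<forall>y\<in>Y. \<forall>y'\<in>Y. dY y y' \<le> cY"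
    using X.bounded Y.bounded by blast
  define c where "c = max cX cY"
  have "0 \<le> c"
    using cX X.zero X.nonempty unfolding c_def by (metis ex_in_conv max.coboundedI1)
  have "admissible X dX Y dY (glue dX dY (\<lambda>_ _. c))"
    by (rule admissible_glue[OF X Y])
      (use \<open>0 \<le> c\<close> cX cY X.nonneg Y.nonneg in \<open>force simp: c_def\<close>)+
  then show ?thesis by blast
qed

lemma gh_dist_leI:
  assumes X: "bounded_pseudometric X dX" and Y: "bounded_pseudometric Y dY"
    and D: "admissible X dX Y dY D"
    and "\<And>x. x \<in> X \<Longrightarrow> \<exists>y\<in>Y. D (Inl x) (Inr y) \<le> r"
    and "\<And>y. y \<in> Y \<Longrightarrow> \<exists>x\<in>X. D (Inl x) (Inr y) \<le> r"
  shows "gh_dist X dX Y dY \<le> r"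
proof -
  interpret U: bounded_pseudometric "Inl ` X \<union> Inr ` Y" D
    by (rule admissible_bounded_pseudometric[OF X Y D])
  have "hdist D (Inl ` X) (Inr ` Y) \<le> r"
  proof (rule U.hdist_leI)
    show "Inl ` X \<noteq> {}" "Inr ` Y \<noteq> {}"
      using X Y by (auto dest: bounded_pseudometric.nonempty)
    show "\<exists>b\<in>Inr ` Y. D a b \<le> r" if "a \<in> Inl ` X" for a
      using that assms(4) by blast
    show "\<exists>a\<in>Inl ` X. D b a \<le> r" if "b \<in> Inr ` Y" for b
      using that assms(5) admissible_commute[OF D] by fastforce
  qed auto
  then show ?thesis
    unfolding gh_dist_def using gh_dist_bdd_below[OF X Y] D by (intro cInf_lower2) auto
qed

lemma gh_dist_lessE:
  assumes X: "bounded_pseudometric X dX" and Y: "bounded_pseudometric Y dY"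
    and "gh_dist X dX Y dY < r"
  obtains D where "admissible X dX Y dY D"
    and "\<And>x. x \<in> X \<Longrightarrow> \<exists>y\<in>Y. D (Inl x) (Inr y) < r"
    and "\<And>y. y \<in> Y \<Longrightarrow> \<exists>x\<in>X. D (Inl x) (Inr y) < r"
proof -
  obtain D where D: "admissible X dX Y dY D" and less: "hdist D (Inl ` X) (Inr ` Y) < r"
    using cInf_lessD[OF _ assms(3)[unfolded gh_dist_def]] admissible_exists[OF X Y] by blast
  interpret U: bounded_pseudometric "Inl ` X \<union> Inr ` Y" D
    by (rule admissible_bounded_pseudometric[OF X Y D])
  have ne: "Inl ` X \<noteq> {}" "Inr ` Y \<noteq> {}"
    using X Y by (auto dest: bounded_pseudometric.nonempty)
  show ?thesis
  proof (rule that[OF D])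
    show "\<exists>y\<in>Y. D (Inl x) (Inr y) < r" if "x \<in> X" for x
      using U.hdist_lessD(1)[OF _ _ ne less, of "Inl x"] that by blast
    show "\<exists>x\<in>X. D (Inl x) (Inr y) < r" if "y \<in> Y" for y
      using U.hdist_lessD(2)[OF _ _ ne less, of "Inr y"] that admissible_commute[OF D] by fastforce
  qed
qed

lemma gh_dist_commute_le:
  assumes X: "bounded_pseudometric X dX" and Y: "bounded_pseudometric Y dY"
  shows "gh_dist Y dY X dX \<le> gh_dist X dX Y dY"
proof (rule dense_ge)
  fix r assume "gh_dist X dX Y dY < r"
  then obtain D where D: "admissible X dX Y dY D"
    and X_near: "\<And>x. x \<in> X \<Longrightarrow> \<exists>y\<in>Y. D (Inl x) (Inr y) < r"
    and Y_near: "\<And>y. y \<in> Y \<Longrightarrow> \<exists>x\<in>X. D (Inl x) (Inr y) < r"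
    using gh_dist_lessE[OF X Y] by blast
  note cross = admissible_cross_dist[OF D]
  have D': "admissible Y dY X dX (glue dY dX (\<lambda>y x. D (Inl x) (Inr y)))"
  proof (rule admissible_glue[OF Y X])
    fix y y' x assume "y \<in> Y" "y' \<in> Y" "x \<in> X"
    then show "D (Inl x) (Inr y) \<le> dY y y' + D (Inl x) (Inr y')"
      and "dY y y' \<le> D (Inl x) (Inr y) + D (Inl x) (Inr y')"
      using cross(3,5)[of x x y y'] bounded_pseudometric.commute[OF Y, of y y']
      by simp_all
  next
    fix y x x' assume "y \<in> Y" "x \<in> X" "x' \<in> X"
    then show "D (Inl x) (Inr y) \<le> D (Inl x') (Inr y) + dX x' x"
      and "dX x x' \<le> D (Inl x) (Inr y) + D (Inl x') (Inr y)"
      using cross(2,4)[of x x' y y] bounded_pseudometric.commute[OF X, of x x'] by simp_all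
  qed (use cross(1) in simp)
  show "gh_dist Y dY X dX \<le> r"
  proof (rule gh_dist_leI[OF Y X D'])
    fix y assume "y \<in> Y"
    with Y_near show "\<exists>x\<in>X. glue dY dX (\<lambda>y x. D (Inl x) (Inr y)) (Inl y) (Inr x) \<le> r"
      by (auto intro: less_imp_le)
  next
    fix x assume "x \<in> X"
    with X_near show "\<exists>y\<in>Y. glue dY dX (\<lambda>y x. D (Inl x) (Inr y)) (Inl y) (Inr x) \<le> r"
      by (auto intro: less_imp_le)
  qed
qed

lemma gh_dist_commute:
  "bounded_pseudometric X dX \<Longrightarrow> bounded_pseudometric Y dY \<Longrightarrow> gh_dist Y dY X dX = gh_dist X dX Y dY"
  by (simp add: gh_dist_commute_le order_antisym)

definition cross_dist_through ::
    "'b set \<Rightarrow> ('a + 'b \<Rightarrow> 'a + 'b \<Rightarrow> real) \<Rightarrow> ('b + 'c \<Rightarrow> 'b + 'c \<Rightarrow> real) \<Rightarrow> 'a \<Rightarrow> 'c \<Rightarrow> real" where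
  "cross_dist_through Y D1 D2 x z = (INF y\<in>Y. D1 (Inl x) (Inr y) + D2 (Inl y) (Inr z))"

lemma cross_dist_through_le:
  assumes D1: "admissible X dX Y dY D1" and D2: "admissible Y dY Z dZ D2"
    and "x \<in> X" "y \<in> Y" "z \<in> Z"
  shows "cross_dist_through Y D1 D2 x z \<le> D1 (Inl x) (Inr y) + D2 (Inl y) (Inr z)"
  unfolding cross_dist_through_def
proof (rule cINF_lower[OF bdd_belowI[of _ 0] \<open>y \<in> Y\<close>])
  fix t assume "t \<in> (\<lambda>y. D1 (Inl x) (Inr y) + D2 (Inl y) (Inr z)) ` Y"
  then show "0 \<le> t"
    using admissible_cross_dist(1)[OF D1 \<open>x \<in> X\<close> \<open>x \<in> X\<close>] admissible_cross_dist(1)[OF D2 _ _ \<open>z \<in> Z\<close> \<open>z \<in> Z\<close>]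
    by force
qed

lemma le_cross_dist_through:
  assumes "Y \<noteq> {}" "\<And>y. y \<in> Y \<Longrightarrow> c \<le> D1 (Inl x) (Inr y) + D2 (Inl y) (Inr z)"
  shows "c \<le> cross_dist_through Y D1 D2 x z"
  unfolding cross_dist_through_def using assms by (intro cINF_greatest)

lemma le_cross_dist_through_add:
  assumes "Y \<noteq> {}"
    and "\<And>y y'. y \<in> Y \<Longrightarrow> y' \<in> Y \<Longrightarrow>
      c \<le> D1 (Inl x) (Inr y) + D2 (Inl y) (Inr z) + (D1 (Inl x') (Inr y') + D2 (Inl y') (Inr z'))"
  shows "c \<le> cross_dist_through Y D1 D2 x z + cross_dist_through Y D1 D2 x' z'"
proof -
  have "c - cross_dist_through Y D1 D2 x' z' \<le> cross_dist_through Y D1 D2 x z"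
  proof (rule le_cross_dist_through[OF \<open>Y \<noteq> {}\<close>])
    fix y assume "y \<in> Y"
    have "c - (D1 (Inl x) (Inr y) + D2 (Inl y) (Inr z)) \<le> cross_dist_through Y D1 D2 x' z'"
      using assms(2)[OF \<open>y \<in> Y\<close>] by (intro le_cross_dist_through[OF \<open>Y \<noteq> {}\<close>]) force
    then show "c - cross_dist_through Y D1 D2 x' z' \<le> D1 (Inl x) (Inr y) + D2 (Inl y) (Inr z)"
      by linarith
  qed
  then show ?thesis by linarith
qed

lemma admissible_glue_cross_dist_through:
  assumes X: "bounded_pseudometric X dX" and Y: "bounded_pseudometric Y dY"
    and Z: "bounded_pseudometric Z dZ"
    and D1: "admissible X dX Y dY D1" and D2: "admissible Y dY Z dZ D2"
  shows "admissible X dX Z dZ (glue dX dZ (cross_dist_through Y D1 D2))"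
proof -
  let ?C = "cross_dist_through Y D1 D2"
  note cross1 = admissible_cross_dist[OF D1] and cross2 = admissible_cross_dist[OF D2]
  note le_C = le_cross_dist_through[OF bounded_pseudometric.nonempty[OF Y]]
  note le_C_add = le_cross_dist_through_add[OF bounded_pseudometric.nonempty[OF Y]]
  note C_le = cross_dist_through_le[OF D1 D2]
  show ?thesis
  proof (rule admissible_glue[OF X Z])
    fix x z assume "x \<in> X" "z \<in> Z"
    then show "0 \<le> ?C x z"
      using cross1(1) cross2(1) by (intro le_C) (simp add: add_nonneg_nonneg)
  next
    fix x x' z assume xxz: "x \<in> X" "x' \<in> X" "z \<in> Z"
    have "?C x z - dX x x' \<le> ?C x' z"
      using C_le[OF xxz(1) _ xxz(3)] cross1(2)[OF xxz(1,2)] by (intro le_C) force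
    then show "?C x z \<le> dX x x' + ?C x' z" by simp
    show "dX x x' \<le> ?C x z + ?C x' z"
    proof (rule le_C_add)
      fix y y' assume "y \<in> Y" "y' \<in> Y"
      then show "dX x x' \<le> D1 (Inl x) (Inr y) + D2 (Inl y) (Inr z) + (D1 (Inl x') (Inr y') + D2 (Inl y') (Inr z))"
        using cross1(4)[OF xxz(1,2), of y y] cross1(3)[OF xxz(2,2), of y y'] cross2(4)[of y' y z z] xxz
        by force
    qed
  next
    fix x z z' assume xzz: "x \<in> X" "z \<in> Z" "z' \<in> Z"
    have "?C x z - dZ z' z \<le> ?C x z'"
      using C_le[OF xzz(1) _ xzz(2)] cross2(3)[OF _ _ xzz(2,3)] by (intro le_C) force
    then show "?C x z \<le> ?C x z' + dZ z' z" by simp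
    show "dZ z z' \<le> ?C x z + ?C x z'"
    proof (rule le_C_add)
      fix y y' assume "y \<in> Y" "y' \<in> Y"
      then show "dZ z z' \<le> D1 (Inl x) (Inr y) + D2 (Inl y) (Inr z) + (D1 (Inl x) (Inr y') + D2 (Inl y') (Inr z'))"
        using cross2(5)[OF _ _ xzz(2,3), of y y] cross2(2)[OF _ _ xzz(3,3), of y y'] cross1(5)[OF xzz(1,1)]
        by force
    qed
  qed
qed

lemma gh_dist_triangle:
  assumes X: "bounded_pseudometric X dX" and Y: "bounded_pseudometric Y dY"
    and Z: "bounded_pseudometric Z dZ"
  shows "gh_dist X dX Z dZ \<le> gh_dist X dX Y dY + gh_dist Y dY Z dZ"
proof -
  have compose: "gh_dist X dX Z dZ \<le> r1 + r2"
    if r1: "gh_dist X dX Y dY < r1" and r2: "gh_dist Y dY Z dZ < r2" for r1 r2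
  proof -
    obtain D1 where D1: "admissible X dX Y dY D1"
      and X_near: "\<And>x. x \<in> X \<Longrightarrow> \<exists>y\<in>Y. D1 (Inl x) (Inr y) < r1"
      and Y_near1: "\<And>y. y \<in> Y \<Longrightarrow> \<exists>x\<in>X. D1 (Inl x) (Inr y) < r1"
      using gh_dist_lessE[OF X Y r1] by blast
    obtain D2 where D2: "admissible Y dY Z dZ D2"
      and Y_near2: "\<And>y. y \<in> Y \<Longrightarrow> \<exists>z\<in>Z. D2 (Inl y) (Inr z) < r2"
      and Z_near: "\<And>z. z \<in> Z \<Longrightarrow> \<exists>y\<in>Y. D2 (Inl y) (Inr z) < r2"
      using gh_dist_lessE[OF Y Z r2] by blast
    let ?C = "cross_dist_through Y D1 D2"
    note C_le = cross_dist_through_le[OF D1 D2]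
    show ?thesis
    proof (rule gh_dist_leI[OF X Z admissible_glue_cross_dist_through[OF X Y Z D1 D2]])
      fix x assume "x \<in> X"
      then obtain y z where "y \<in> Y" "D1 (Inl x) (Inr y) < r1" "z \<in> Z" "D2 (Inl y) (Inr z) < r2"
        using X_near Y_near2 by blast
      then show "\<exists>z\<in>Z. glue dX dZ ?C (Inl x) (Inr z) \<le> r1 + r2"
        using C_le[OF \<open>x \<in> X\<close>] by force
    next
      fix z assume "z \<in> Z"
      then obtain x y where "y \<in> Y" "D2 (Inl y) (Inr z) < r2" "x \<in> X" "D1 (Inl x) (Inr y) < r1"
        using Z_near Y_near1 by blast
      then show "\<exists>x\<in>X. glue dX dZ ?C (Inl x) (Inr z) \<le> r1 + r2"
        using C_le[OF _ _ \<open>z \<in> Z\<close>] by force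
    qed
  qed
  show ?thesis
  proof (rule field_le_epsilon)
    fix e :: real assume "0 < e"
    then show "gh_dist X dX Z dZ \<le> gh_dist X dX Y dY + gh_dist Y dY Z dZ + e"
      using compose[of "gh_dist X dX Y dY + e / 2" "gh_dist Y dY Z dZ + e / 2"] by simp
  qed
qed

lemma closedin_sublevel_nonexpansive:
  assumes M: "Metric_space M d" and f: "\<And>y y'. y \<in> M \<Longrightarrow> y' \<in> M \<Longrightarrow> f y \<le> f y' + d y y'"
  shows "closedin (Metric_space.mtopology M d) {y \<in> M. f y \<le> c}"
  unfolding Metric_space.closedin_metric[OF M]
proof (intro conjI allI impI)
  fix y assume y: "y \<in> M - {y \<in> M. f y \<le> c}"
  have "disjnt {y \<in> M. f y \<le> c} (Metric_space.mball M d y (f y - c))"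
  proof (clarsimp simp: disjnt_iff Metric_space.in_mball[OF M])
    fix y' assume "y' \<in> M" "f y' \<le> c" "d y y' < f y - c"
    then show False using f[of y y'] y by auto
  qed
  moreover have "f y - c > 0" using y by auto
  ultimately show "\<exists>r>0. disjnt {y \<in> M. f y \<le> c} (Metric_space.mball M d y r)" by blast
qed auto

lemma hdist_image_eq:
  assumes "\<And>a b. a \<in> A \<Longrightarrow> b \<in> B \<Longrightarrow> d (f a) (f b) = d' a b"
  shows "hdist d (f ` A) (f ` B) = hdist d' A B"
  unfolding hdist_def image_image using assms by (simp cong: SUP_cong INF_cong)

lemma hyperspace_subset: "hyperspace M d \<subseteq> {A. A \<subseteq> M \<and> A \<noteq> {}}"
  unfolding hyperspace_def by blast

lemma hyperspace_bounded_pseudometric: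
  assumes "Metric_space M d" "bounded_pseudometric M d"
  shows "bounded_pseudometric (hyperspace M d) (hdist d)"
proof -
  interpret M: bounded_pseudometric M d by (fact assms(2))
  have "M \<in> hyperspace M d"
    unfolding hyperspace_def using M.nonempty closedin_topspace[of "Metric_space.mtopology M d"]
    by (simp add: Metric_space.topspace_mtopology[OF assms(1)])
  then show ?thesis
    by (intro bounded_pseudometric.subset[OF M.hdist_bounded_pseudometric hyperspace_subset]) blast
qed

lemma (in bounded_pseudometric) hyperspace_near:
  assumes Y: "Metric_space Y dY"
    and j: "j ` Y \<subseteq> S" "\<And>y y'. y \<in> Y \<Longrightarrow> y' \<in> Y \<Longrightarrow> d (j y) (j y') = dY y y'"
    and A: "A \<subseteq> S" "A \<noteq> {}"
    and near: "\<And>a. a \<in> A \<Longrightarrow> \<exists>y\<in>Y. d a (j y) \<le> r"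
  shows "\<exists>B\<in>hyperspace Y dY. hdist d A (j ` B) \<le> r"
proof -
  define B where "B = {y \<in> Y. (INF a\<in>A. d (j y) a) \<le> r}"
  have "closedin (Metric_space.mtopology Y dY) B"
    unfolding B_def
  proof (rule closedin_sublevel_nonexpansive[OF Y])
    fix y y' assume "y \<in> Y" "y' \<in> Y"
    then show "(INF a\<in>A. d (j y) a) \<le> (INF a\<in>A. d (j y') a) + dY y y'"
      using INF_dist_triangle[of "j y" "j y'" A] j A by (simp add: image_subset_iff add.commute)
  qed
  have B_near: "\<exists>y\<in>B. d a (j y) \<le> r" if a: "a \<in> A" for a
  proof -
    obtain y where y: "y \<in> Y" "d a (j y) \<le> r" using near[OF a] by blast
    have jy: "j y \<in> S" using j(1) y(1) by blast
    have "(INF a\<in>A. d (j y) a) \<le> d (j y) a" by (rule INF_dist_le[OF jy A(1) a])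
    also have "\<dots> = d a (j y)" using commute[OF jy] a A(1) by blast
    also have "\<dots> \<le> r" by (fact y(2))
    finally show ?thesis using y unfolding B_def by blast
  qed
  then have "B \<noteq> {}" using A(2) by blast
  have "B \<subseteq> Y" unfolding B_def by blast
  then have jB: "j ` B \<subseteq> S" "j ` B \<noteq> {}" using j(1) \<open>B \<noteq> {}\<close> by auto
  have "hdist d A (j ` B) \<le> r"
  proof (subst hdist_le_iff[OF A(1) jB(1) A(2) jB(2)], intro conjI ballI)
    fix a assume "a \<in> A"
    then obtain y where "y \<in> B" "d a (j y) \<le> r" using B_near by blast
    then show "(INF b\<in>j ` B. d a b) \<le> r"
      using INF_dist_le[of a "j ` B" "j y"] \<open>a \<in> A\<close> A(1) jB(1) by force
  next
    fix b assume "b \<in> j ` B"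
    then show "(INF a\<in>A. d b a) \<le> r" unfolding B_def by blast
  qed
  moreover have "B \<in> hyperspace Y dY"
    unfolding hyperspace_def using \<open>closedin _ B\<close> \<open>B \<noteq> {}\<close> \<open>B \<subseteq> Y\<close> by blast
  ultimately show ?thesis by blast
qed

definition sum_embed :: "'a set + 'b set \<Rightarrow> ('a + 'b) set" where
  "sum_embed = case_sum ((`) Inl) ((`) Inr)"

lemma sum_embed_simps [simp]: "sum_embed (Inl A) = Inl ` A" "sum_embed (Inr B) = Inr ` B"
  by (simp_all add: sum_embed_def)

lemma admissible_hyperspace:
  assumes X: "bounded_pseudometric X dX" and Y: "bounded_pseudometric Y dY"
    and D: "admissible X dX Y dY D"
  shows "admissible (hyperspace X dX) (hdist dX) (hyperspace Y dY) (hdist dY)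
    (\<lambda>u v. hdist D (sum_embed u) (sum_embed v))"
proof -
  let ?U = "Inl ` X \<union> Inr ` Y" and ?V = "Inl ` hyperspace X dX \<union> Inr ` hyperspace Y dY"
  interpret U: bounded_pseudometric ?U D
    by (rule admissible_bounded_pseudometric[OF X Y D])
  have HX: "A \<subseteq> X" "A \<noteq> {}" if "A \<in> hyperspace X dX" for A
    using that hyperspace_subset by auto
  have HY: "B \<subseteq> Y" "B \<noteq> {}" if "B \<in> hyperspace Y dY" for B
    using that hyperspace_subset by auto
  have embed: "sum_embed u \<subseteq> ?U \<and> sum_embed u \<noteq> {}" if "u \<in> ?V" for u
  proof (cases u)
    case (Inl A)
    with that have "A \<in> hyperspace X dX" by auto
    show ?thesis using HX[OF \<open>A \<in> hyperspace X dX\<close>] Inl by auto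
  next
    case (Inr B)
    with that have "B \<in> hyperspace Y dY" by auto
    show ?thesis using HY[OF \<open>B \<in> hyperspace Y dY\<close>] Inr by auto
  qed
  note embed = embed[THEN conjunct1] embed[THEN conjunct2]
  show ?thesis
    unfolding admissible_def
  proof (intro conjI ballI)
    fix A A' assume "A \<in> hyperspace X dX" "A' \<in> hyperspace X dX"
    then have "A \<subseteq> X" "A' \<subseteq> X" by (auto dest: HX)
    then show "hdist D (sum_embed (Inl A)) (sum_embed (Inl A')) = hdist dX A A'"
      using admissible_Inl[OF D] by (simp, intro hdist_image_eq) blast
  next
    fix B B' assume "B \<in> hyperspace Y dY" "B' \<in> hyperspace Y dY"
    then have "B \<subseteq> Y" "B' \<subseteq> Y" by (auto dest: HY)
    then show "hdist D (sum_embed (Inr B)) (sum_embed (Inr B')) = hdist dY B B'"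
      using admissible_Inr[OF D] by (simp, intro hdist_image_eq) blast
  next
    fix u assume u: "u \<in> ?V"
    show "hdist D (sum_embed u) (sum_embed u) = 0"
      by (rule U.hdist_self) (rule embed, rule u)+
  next
    fix u v assume uv: "u \<in> ?V" "v \<in> ?V"
    show "0 \<le> hdist D (sum_embed u) (sum_embed v)"
      by (rule U.hdist_nonneg) (rule embed, rule uv)+
    show "hdist D (sum_embed u) (sum_embed v) = hdist D (sum_embed v) (sum_embed u)"
      by (rule U.hdist_commute) (rule embed, rule uv)+
  next
    fix u v w assume uvw: "u \<in> ?V" "v \<in> ?V" "w \<in> ?V"
    show "hdist D (sum_embed u) (sum_embed w)
        \<le> hdist D (sum_embed u) (sum_embed v) + hdist D (sum_embed v) (sum_embed w)"
      by (rule U.hdist_triangle) (rule embed, rule uvw)+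
  qed
qed

lemma gh_dist_hyperspace_le:
  assumes X: "Metric_space X dX" "bounded_pseudometric X dX"
    and Y: "Metric_space Y dY" "bounded_pseudometric Y dY"
  shows "gh_dist (hyperspace X dX) (hdist dX) (hyperspace Y dY) (hdist dY) \<le> gh_dist X dX Y dY"
proof (rule dense_ge)
  fix r assume "gh_dist X dX Y dY < r"
  then obtain D where D: "admissible X dX Y dY D"
    and X_near: "\<And>x. x \<in> X \<Longrightarrow> \<exists>y\<in>Y. D (Inl x) (Inr y) < r"
    and Y_near: "\<And>y. y \<in> Y \<Longrightarrow> \<exists>x\<in>X. D (Inl x) (Inr y) < r"
    using gh_dist_lessE[OF X(2) Y(2)] by blast
  let ?U = "Inl ` X \<union> Inr ` Y" and ?HX = "hyperspace X dX" and ?HY = "hyperspace Y dY"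
  interpret U: bounded_pseudometric ?U D
    by (rule admissible_bounded_pseudometric[OF X(2) Y(2) D])
  define D' where "D' u v = hdist D (sum_embed u) (sum_embed v)" for u v
  have D': "admissible ?HX (hdist dX) ?HY (hdist dY) D'"
    unfolding D'_def by (rule admissible_hyperspace[OF X(2) Y(2) D])
  have X_near': "\<exists>y\<in>Y. D a (Inr y) \<le> r" if a: "a \<in> Inl ` X" for a
  proof -
    obtain x y where "x \<in> X" "a = Inl x" "y \<in> Y" "D (Inl x) (Inr y) < r" using a X_near by blast
    then show ?thesis by (auto intro!: bexI[of _ y])
  qed
  have Y_near': "\<exists>x\<in>X. D b (Inl x) \<le> r" if b: "b \<in> Inr ` Y" for b
  proof -
    obtain x y where xy: "y \<in> Y" "b = Inr y" "x \<in> X" "D (Inl x) (Inr y) < r" using b Y_near by blast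
    moreover have "D b (Inl x) = D (Inl x) (Inr y)" using U.commute xy by blast
    ultimately show ?thesis by (auto intro!: bexI[of _ x])
  qed
  show "gh_dist ?HX (hdist dX) ?HY (hdist dY) \<le> r"
  proof (rule gh_dist_leI[OF hyperspace_bounded_pseudometric[OF X] hyperspace_bounded_pseudometric[OF Y] D'])
    fix A assume "A \<in> ?HX"
    then have A: "A \<subseteq> X" "A \<noteq> {}" using hyperspace_subset by auto
    have "\<exists>B\<in>?HY. hdist D (Inl ` A) (Inr ` B) \<le> r"
      by (rule U.hyperspace_near[OF Y(1) _ admissible_Inr[OF D]]) (use A X_near' in blast)+
    then show "\<exists>B\<in>?HY. D' (Inl A) (Inr B) \<le> r" unfolding D'_def by simp
  next
    fix B assume "B \<in> ?HY"
    then have B: "B \<subseteq> Y" "B \<noteq> {}" using hyperspace_subset by auto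
    have "\<exists>A\<in>?HX. hdist D (Inr ` B) (Inl ` A) \<le> r"
      by (rule U.hyperspace_near[OF X(1) _ admissible_Inl[OF D]]) (use B Y_near' in blast)+
    then obtain A where A: "A \<in> ?HX" "hdist D (Inr ` B) (Inl ` A) \<le> r" by blast
    have "Inl ` A \<subseteq> ?U" "Inr ` B \<subseteq> ?U" using A(1) B(1) hyperspace_subset[of X dX] by auto
    then have "D' (Inl A) (Inr B) \<le> r" using A(2) unfolding D'_def by (simp add: U.hdist_commute)
    with A(1) show "\<exists>A\<in>?HX. D' (Inl A) (Inr B) \<le> r" by blast
  qed
qed

lemma exists_unordered_pair_code:
  assumes "finite N"
  obtains g :: "'a \<Rightarrow> 'a \<Rightarrow> real" where "\<And>i j. g i j = g j i" "\<And>i j. 0 \<le> g i j"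
    "\<And>i j u v. {i, j} \<subseteq> N \<Longrightarrow> {u, v} \<subseteq> N \<Longrightarrow> g i j = g u v \<Longrightarrow> {i, j} = {u, v}"
proof -
  obtain code :: "'a \<Rightarrow> nat" where code: "inj_on code N"
    using finite_imp_inj_to_nat_seg[OF assms] by blast
  define g where "g i j = real (prod_encode (max (code i) (code j), min (code i) (code j)))" for i j
  have pair_eq: "{a, b} = {min a b, max a b}" for a b :: nat
    by (auto simp: min_def max_def)
  have inj: "{i, j} = {u, v}"
    if N: "{i, j} \<subseteq> N" "{u, v} \<subseteq> N" and eq: "g i j = g u v" for i j u v
  proof -
    have "min (code i) (code j) = min (code u) (code v)" "max (code i) (code j) = max (code u) (code v)"
      using eq unfolding g_def by simp_all
    then have "code ` {i, j} = code ` {u, v}"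
      using pair_eq[of "code i" "code j"] pair_eq[of "code u" "code v"] by simp
    then show ?thesis by (rule inj_on_image_eq_iff[OF code N, THEN iffD1])
  qed
  show thesis
  proof (rule that[of g])
    show "g i j = g j i" for i j unfolding g_def by (simp add: max.commute min.commute)
    show "0 \<le> g i j" for i j unfolding g_def by simp
  qed (fact inj)
qed

lemma exists_generic_weights:
  fixes d :: "'a \<Rightarrow> 'a \<Rightarrow> real"
  assumes "finite N" "0 < \<delta>"
  obtains w :: "'a \<Rightarrow> 'a \<Rightarrow> real" where
    "\<And>i j. w i j = w j i" "\<And>i j. 0 \<le> w i j" "\<And>i j. i \<in> N \<Longrightarrow> j \<in> N \<Longrightarrow> w i j < \<delta>"
    "\<And>i j u v. i \<in> N \<Longrightarrow> j \<in> N \<Longrightarrow> u \<in> N \<Longrightarrow> v \<in> N \<Longrightarrow> {i, j} \<noteq> {u, v} \<Longrightarrow>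
      d i j + w i j \<noteq> d u v + w u v"
proof -
  obtain g :: "'a \<Rightarrow> 'a \<Rightarrow> real" where g_commute: "\<And>i j. g i j = g j i"
    and g_nonneg: "\<And>i j. 0 \<le> g i j"
    and g_inj: "\<And>i j u v. {i, j} \<subseteq> N \<Longrightarrow> {u, v} \<subseteq> N \<Longrightarrow> g i j = g u v \<Longrightarrow> {i, j} = {u, v}"
    using exists_unordered_pair_code[OF assms(1)] by blast
  (* the only scales at which two distinct pairs receive equal perturbed distances *)
  define Bad where "Bad = (\<lambda>(i, j, u, v). (d u v - d i j) / (g i j - g u v)) ` (N \<times> N \<times> N \<times> N)"
  have "finite Bad" unfolding Bad_def using assms(1) by simp
  have small: "\<forall>\<^sub>F \<eta> in at_right 0. \<eta> * g i j < \<delta>" for i j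
  proof -
    have "((\<lambda>\<eta>. \<eta> * g i j) \<longlongrightarrow> 0 * g i j) (at_right 0)"
      by (intro tendsto_intros)
    then show ?thesis using assms(2) by (simp add: order_tendstoD(2))
  qed
  have "\<forall>\<^sub>F \<eta> in at_right 0. \<forall>b\<in>Bad. \<eta> \<noteq> b"
    using \<open>finite Bad\<close> by (simp add: eventually_ball_finite eventually_neq_at_within)
  moreover have "\<forall>\<^sub>F \<eta> in at_right 0. \<forall>i\<in>N. \<forall>j\<in>N. \<eta> * g i j < \<delta>"
    using assms(1) small by (simp add: eventually_ball_finite)
  ultimately have "\<forall>\<^sub>F \<eta> in at_right 0. 0 < \<eta> \<and> \<eta> \<notin> Bad \<and> (\<forall>i\<in>N. \<forall>j\<in>N. \<eta> * g i j < \<delta>)"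
    using eventually_at_right_less[of 0] by eventually_elim blast
  then obtain \<eta> where \<eta>: "0 < \<eta>" "\<eta> \<notin> Bad" "\<forall>i\<in>N. \<forall>j\<in>N. \<eta> * g i j < \<delta>"
    using eventually_happens' trivial_limit_at_right_real by blast
  show thesis
  proof (rule that[of "\<lambda>i j. \<eta> * g i j"])
    show "\<eta> * g i j = \<eta> * g j i" for i j by (simp add: g_commute)
    show "0 \<le> \<eta> * g i j" for i j using \<eta>(1) g_nonneg[of i j] by simp
    show "\<eta> * g i j < \<delta>" if "i \<in> N" "j \<in> N" for i j using \<eta>(3) that by blast
    fix i j u v assume N: "i \<in> N" "j \<in> N" "u \<in> N" "v \<in> N" and "{i, j} \<noteq> {u, v}"
    then have "g i j - g u v \<noteq> 0" using g_inj[of i j u v] by force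
    show "d i j + \<eta> * g i j \<noteq> d u v + \<eta> * g u v"
    proof
      assume "d i j + \<eta> * g i j = d u v + \<eta> * g u v"
      then have "\<eta> = (d u v - d i j) / (g i j - g u v)"
        using \<open>g i j - g u v \<noteq> 0\<close> by (simp add: field_simps)
      moreover have "(d u v - d i j) / (g i j - g u v) \<in> Bad"
        unfolding Bad_def using N by force
      ultimately show False using \<eta>(2) by simp
    qed
  qed
qed

lemma general_position_perturbation:
  assumes d: "Metric_space N d" and "finite N" "0 < \<delta>"
  obtains d' where "Metric_space N d'" "general_position N d'"
    and "\<And>i j. i \<in> N \<Longrightarrow> j \<in> N \<Longrightarrow> d i j \<le> d' i j \<and> d' i j \<le> d i j + \<delta>"
proof -
  obtain w where w_commute: "\<And>i j. w i j = w j i" and w_nonneg: "\<And>i j. 0 \<le> w i j"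
    and w_small: "\<And>i j. i \<in> N \<Longrightarrow> j \<in> N \<Longrightarrow> w i j < \<delta> / 2"
    and w_generic: "\<And>i j u v. i \<in> N \<Longrightarrow> j \<in> N \<Longrightarrow> u \<in> N \<Longrightarrow> v \<in> N \<Longrightarrow> {i, j} \<noteq> {u, v} \<Longrightarrow>
      d i j + w i j \<noteq> d u v + w u v"
    using exists_generic_weights[OF assms(2), of "\<delta> / 2" d] assms(3) by auto
  define d' where "d' i j = (if i = j then 0 else d i j + \<delta> / 2 + w i j)" for i j
  have d'_nonneg: "0 \<le> d' i j" for i j
    unfolding d'_def using Metric_space.nonneg[OF d, of i j] w_nonneg[of i j] assms(3) by simp
  (* the uniform shift \<delta> / 2 dominates the weights, so triangles with distinct vertices become strict *)
  have strict: "d' x z < d' x y + d' y z"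
    if "x \<in> N" "y \<in> N" "z \<in> N" "x \<noteq> y" "y \<noteq> z" "x \<noteq> z" for x y z
    using that Metric_space.triangle[OF d, of x y z] w_small[of x z] w_nonneg[of x y] w_nonneg[of y z]
    unfolding d'_def by simp
  have "Metric_space N d'"
  proof
    show "0 \<le> d' x y" for x y by (rule d'_nonneg)
    show "d' x y = d' y x" for x y
      unfolding d'_def using Metric_space.commute[OF d] w_commute by simp
    show "d' x y = 0 \<longleftrightarrow> x = y" if "x \<in> N" "y \<in> N" for x y
      unfolding d'_def using Metric_space.nonneg[OF d, of x y] w_nonneg[of x y] assms(3) by auto
    show "d' x z \<le> d' x y + d' y z" if "x \<in> N" "y \<in> N" "z \<in> N" for x y z
    proof (cases "x = y \<or> y = z \<or> x = z")
      case True
      then show ?thesis using d'_nonneg[of x y] d'_nonneg[of y z] by (auto simp: d'_def)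
    next
      case False
      then show ?thesis using strict[OF that] by simp
    qed
  qed
  moreover have "general_position N d'"
    unfolding general_position_def
  proof (intro conjI ballI impI)
    fix x y u v assume "x \<in> N" "y \<in> N" "u \<in> N" "v \<in> N" "x \<noteq> y \<and> u \<noteq> v \<and> {x, y} \<noteq> {u, v}"
    then show "d' x y \<noteq> d' u v" using w_generic[of x y u v] unfolding d'_def by auto
  qed (use strict in blast)
  moreover have "d i j \<le> d' i j \<and> d' i j \<le> d i j + \<delta>" if "i \<in> N" "j \<in> N" for i j
    using that Metric_space.zero[OF d that] w_nonneg[of i j] w_small[OF that] assms(3)
    unfolding d'_def by auto
  ultimately show thesis by (rule that)
qed

lemma bounded_pseudometric_if_compact:
  assumes M: "Metric_space M d" and "compact_space (Metric_space.mtopology M d)" "M \<noteq> {}"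
  shows "bounded_pseudometric M d"
proof
  have "Metric_space.mbounded M d M"
    using assms(2) Metric_space.compactin_imp_mbounded[OF M]
    unfolding compact_space_def Metric_space.topspace_mtopology[OF M] by blast
  then show "\<exists>c. \<forall>x\<in>M. \<forall>y\<in>M. d x y \<le> c"
    using Metric_space.mbounded_alt[OF M] by blast
qed (use assms Metric_space.zero[OF M] Metric_space.commute[OF M] Metric_space.triangle[OF M] in auto)

lemma compact_space_if_finite:
  assumes "Metric_space M d" "finite M"
  shows "compact_space (Metric_space.mtopology M d)"
  unfolding compact_space_def
  by (rule finite_imp_compactin) (simp_all add: Metric_space.topspace_mtopology[OF assms(1)] assms(2))

lemma gh_dist_le_net:
  assumes X: "bounded_pseudometric X dX" and N: "bounded_pseudometric N dN"
    and h: "h ` N \<subseteq> X"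
    and dist: "\<And>i j. i \<in> N \<Longrightarrow> j \<in> N \<Longrightarrow> dX (h i) (h j) \<le> dN i j \<and> dN i j \<le> dX (h i) (h j) + 2 * \<delta>"
    and net: "\<And>x. x \<in> X \<Longrightarrow> \<exists>i\<in>N. dX x (h i) \<le> \<epsilon>"
    and "0 \<le> \<delta>"
  shows "gh_dist X dX N dN \<le> \<epsilon> + \<delta>"
proof -
  interpret X: bounded_pseudometric X dX by (fact X)
  interpret N: bounded_pseudometric N dN by (fact N)
  have hN: "h i \<in> X" if "i \<in> N" for i using h that by blast
  (* the shift \<delta> pays for the distortion of dN against dX *)
  define C where "C x i = dX x (h i) + \<delta>" for x i
  have D: "admissible X dX N dN (glue dX dN C)"
  proof (rule admissible_glue[OF X N])
    fix x i assume "x \<in> X" "i \<in> N"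
    then show "0 \<le> C x i" unfolding C_def using X.nonneg hN \<open>0 \<le> \<delta>\<close> by (simp add: add_nonneg_nonneg)
  next
    fix x x' i assume "x \<in> X" "x' \<in> X" "i \<in> N"
    then show "C x i \<le> dX x x' + C x' i" "dX x x' \<le> C x i + C x' i"
      unfolding C_def using X.triangle[of x x' "h i"] X.triangle[of x "h i" x'] X.commute[of x' "h i"]
        hN \<open>0 \<le> \<delta>\<close> by simp_all
  next
    fix x i j assume "x \<in> X" "i \<in> N" "j \<in> N"
    then show "C x i \<le> C x j + dN j i" "dN i j \<le> C x i + C x j"
      unfolding C_def using X.triangle[of x "h j" "h i"] X.triangle[of "h i" x "h j"] X.commute[of x "h i"]
        dist[of j i] dist[of i j] hN by simp_all
  qed
  have "0 \<le> \<epsilon>"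
    using net X.nonneg hN X.nonempty by (meson all_not_in_conv order_trans)
  show ?thesis
  proof (rule gh_dist_leI[OF X N D])
    fix x assume "x \<in> X"
    then obtain i where "i \<in> N" "dX x (h i) \<le> \<epsilon>" using net by blast
    then show "\<exists>i\<in>N. glue dX dN C (Inl x) (Inr i) \<le> \<epsilon> + \<delta>" unfolding C_def by auto
  next
    fix i assume "i \<in> N"
    then show "\<exists>x\<in>X. glue dX dN C (Inl x) (Inr i) \<le> \<epsilon> + \<delta>"
      using hN X.zero \<open>0 \<le> \<epsilon>\<close> unfolding C_def by (intro bexI[of _ "h i"]) auto
  qed
qed

lemma Metric_space_pullback:
  assumes X: "Metric_space X d" and h: "inj_on h N" "h ` N \<subseteq> X"
  shows "Metric_space N (\<lambda>i j. d (h i) (h j))"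
proof
  show "0 \<le> d (h i) (h j)" "d (h i) (h j) = d (h j) (h i)" for i j
    by (simp_all add: Metric_space.nonneg[OF X] Metric_space.commute[OF X])
  show "d (h i) (h j) = 0 \<longleftrightarrow> i = j" if "i \<in> N" "j \<in> N" for i j
  proof -
    have "h i \<in> X" "h j \<in> X" using h(2) that by auto
    then show ?thesis using Metric_space.zero[OF X] inj_on_eq_iff[OF h(1) that] by simp
  qed
  show "d (h i) (h k) \<le> d (h i) (h j) + d (h j) (h k)" if "i \<in> N" "j \<in> N" "k \<in> N" for i j k
    by (rule Metric_space.triangle[OF X]) (use h(2) that in blast)+
qed

lemma compact_approx_general_position:
  assumes X: "Metric_space X dX" "compact_space (Metric_space.mtopology X dX)" "X \<noteq> {}"
    and "0 < e"
  obtains N :: "nat set" and dN where "Metric_space N dN" "finite N" "N \<noteq> {}"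
    "general_position N dN" "gh_dist X dX N dN \<le> e"
proof -
  have "Metric_space.mtotally_bounded X dX X"
    using Metric_space.compact_space_eq_mcomplete_mtotally_bounded[OF X(1)] X(2) by simp
  then obtain K where K: "finite K" "K \<subseteq> X" "X \<subseteq> (\<Union>k\<in>K. Metric_space.mball X dX k (e / 2))"
    unfolding Metric_space.mtotally_bounded_def[OF X(1)]
    by (elim allE[of _ "e / 2"] impE exE conjE) (use \<open>0 < e\<close> in auto)
  define N where "N = {0..<card K}"
  obtain h where h: "bij_betw h N K"
    using ex_bij_betw_nat_finite[OF K(1)] unfolding N_def by blast
  have hN: "h i \<in> X" if "i \<in> N" for i using h K(2) that unfolding bij_betw_def by blast
  have "N \<noteq> {}" "finite N" using K X(3) unfolding N_def by auto
  define b where "b i j = dX (h i) (h j)" for i j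
  have "Metric_space N b"
    unfolding b_def using hN by (intro Metric_space_pullback[OF X(1) bij_betw_imp_inj_on[OF h]]) blast
  then obtain dN where dN: "Metric_space N dN" "general_position N dN"
    and dist: "\<And>i j. i \<in> N \<Longrightarrow> j \<in> N \<Longrightarrow> b i j \<le> dN i j \<and> dN i j \<le> b i j + e"
    using general_position_perturbation[OF _ \<open>finite N\<close> \<open>0 < e\<close>] by blast
  have "gh_dist X dX N dN \<le> e / 2 + e / 2"
  proof (rule gh_dist_le_net)
    show "bounded_pseudometric X dX" by (rule bounded_pseudometric_if_compact[OF X])
    show "bounded_pseudometric N dN"
      using bounded_pseudometric_if_compact[OF dN(1) compact_space_if_finite[OF dN(1)]]
        \<open>finite N\<close> \<open>N \<noteq> {}\<close> by blast
    show "h ` N \<subseteq> X" using hN by blast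
    show "dX (h i) (h j) \<le> dN i j \<and> dN i j \<le> dX (h i) (h j) + 2 * (e / 2)" if "i \<in> N" "j \<in> N" for i j
      using dist[OF that] unfolding b_def by simp
    show "\<exists>i\<in>N. dX x (h i) \<le> e / 2" if x: "x \<in> X" for x
    proof -
      obtain k where "k \<in> K" "x \<in> Metric_space.mball X dX k (e / 2)" using K(3) x by blast
      then have "dX k x < e / 2" by (simp add: Metric_space.in_mball[OF X(1)])
      moreover obtain i where "i \<in> N" "h i = k" using h \<open>k \<in> K\<close> unfolding bij_betw_def by blast
      ultimately have "dX x (h i) \<le> e / 2"
        using Metric_space.commute[OF X(1), of x k] by simp
      with \<open>i \<in> N\<close> show ?thesis by blast
    qed
  qed (use \<open>0 < e\<close> in simp)
  then show thesis using that dN \<open>finite N\<close> \<open>N \<noteq> {}\<close> by simp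
qed

lemma gh_dist_le_hyperspace_approx:
  assumes X: "Metric_space X dX" "bounded_pseudometric X dX"
    and Y: "Metric_space Y dY" "bounded_pseudometric Y dY"
    and X': "Metric_space X' dX'" "bounded_pseudometric X' dX'"
    and Y': "Metric_space Y' dY'" "bounded_pseudometric Y' dY'"
    and hyperspace_eq: "gh_dist (hyperspace X' dX') (hdist dX') (hyperspace Y' dY') (hdist dY')
      = gh_dist X' dX' Y' dY'"
  shows "gh_dist X dX Y dY \<le> gh_dist (hyperspace X dX) (hdist dX) (hyperspace Y dY) (hdist dY)
    + 2 * (gh_dist X dX X' dX' + gh_dist Y dY Y' dY')"
proof -
  note HX = hyperspace_bounded_pseudometric[OF X] and HY = hyperspace_bounded_pseudometric[OF Y]
  note HX' = hyperspace_bounded_pseudometric[OF X'] and HY' = hyperspace_bounded_pseudometric[OF Y']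
  have "gh_dist X dX Y dY \<le> gh_dist X dX X' dX' + gh_dist X' dX' Y' dY' + gh_dist Y' dY' Y dY"
    using gh_dist_triangle[OF X(2) X'(2) Y(2)] gh_dist_triangle[OF X'(2) Y'(2) Y(2)] by linarith
  moreover have "gh_dist X' dX' Y' dY' \<le>
      gh_dist (hyperspace X' dX') (hdist dX') (hyperspace X dX) (hdist dX)
    + gh_dist (hyperspace X dX) (hdist dX) (hyperspace Y dY) (hdist dY)
    + gh_dist (hyperspace Y dY) (hdist dY) (hyperspace Y' dY') (hdist dY')"
    using gh_dist_triangle[OF HX' HX HY'] gh_dist_triangle[OF HX HY HY'] hyperspace_eq by linarith
  moreover have "gh_dist (hyperspace X' dX') (hdist dX') (hyperspace X dX) (hdist dX) \<le> gh_dist X dX X' dX'"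
    using gh_dist_hyperspace_le[OF X' X] gh_dist_commute[OF X(2) X'(2)] by simp
  moreover have "gh_dist (hyperspace Y dY) (hdist dY) (hyperspace Y' dY') (hdist dY') \<le> gh_dist Y dY Y' dY'"
    by (rule gh_dist_hyperspace_le[OF Y Y'])
  moreover have "gh_dist Y' dY' Y dY = gh_dist Y dY Y' dY'"
    by (rule gh_dist_commute[OF Y(2) Y'(2)])
  ultimately show ?thesis by argo
qed

theorem mainTheorem20:
  assumes fin: "\<forall>(X::nat set) dX (Y::nat set) dY.
      Metric_space X dX \<and> finite X \<and> X \<noteq> {} \<and> general_position X dX \<and>
      Metric_space Y dY \<and> finite Y \<and> Y \<noteq> {} \<and> general_position Y dY \<longrightarrow>
      gh_dist (hyperspace X dX) (hdist dX) (hyperspace Y dY) (hdist dY) = gh_dist X dX Y dY"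
  and X: "Metric_space X dX" "compact_space (Metric_space.mtopology X dX)" "X \<noteq> {}"
  and Y: "Metric_space Y dY" "compact_space (Metric_space.mtopology Y dY)" "Y \<noteq> {}"
  shows "gh_dist (hyperspace X dX) (hdist dX) (hyperspace Y dY) (hdist dY) = gh_dist X dX Y dY"
proof -
  have bX: "bounded_pseudometric X dX" and bY: "bounded_pseudometric Y dY"
    using bounded_pseudometric_if_compact X Y by blast+
  have "gh_dist X dX Y dY \<le> gh_dist (hyperspace X dX) (hdist dX) (hyperspace Y dY) (hdist dY)"
  proof (rule field_le_epsilon)
    fix e :: real assume "0 < e"
    then have "0 < e / 4" by simp
    obtain X' :: "nat set" and dX' where X': "Metric_space X' dX'" "finite X'" "X' \<noteq> {}"
      "general_position X' dX'" "gh_dist X dX X' dX' \<le> e / 4"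
      using compact_approx_general_position[OF X \<open>0 < e / 4\<close>] by blast
    obtain Y' :: "nat set" and dY' where Y': "Metric_space Y' dY'" "finite Y'" "Y' \<noteq> {}"
      "general_position Y' dY'" "gh_dist Y dY Y' dY' \<le> e / 4"
      using compact_approx_general_position[OF Y \<open>0 < e / 4\<close>] by blast
    have "bounded_pseudometric X' dX'" "bounded_pseudometric Y' dY'"
      using bounded_pseudometric_if_compact compact_space_if_finite X' Y' by blast+
    moreover have "gh_dist (hyperspace X' dX') (hdist dX') (hyperspace Y' dY') (hdist dY')
        = gh_dist X' dX' Y' dY'"
      using fin X' Y' by blast
    ultimately show "gh_dist X dX Y dY \<le> gh_dist (hyperspace X dX) (hdist dX) (hyperspace Y dY) (hdist dY) + e"
      using gh_dist_le_hyperspace_approx[OF X(1) bX Y(1) bY X'(1) _ Y'(1)] X'(5) Y'(5) by fastforce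
  qed
  with gh_dist_hyperspace_le[OF X(1) bX Y(1) bY] show ?thesis by linarith
qed

end
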